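(* Let $\bm A=(A_1,\dots,A_d)$ be Hermitian matrices in $M_n(\mathbb{C})$, $B\in M_n(\mathbb{C})$, and $(\bm\lambda,\nu)\in\mathbb{R}^d\times\mathbb{C}$. Then $$\left|\bar\mu^{C}_{(\bm\lambda,\nu)}(\bm A,B)-\dot\mu^{C}_{(\bm\lambda,\nu)}(\bm A,B)\right|\le\sqrt N\,\big\|(B-\nu I)-(B-\nu I)^\dagger\big\|+\Delta\big(L_{(\bm\lambda,\nu)}(\bm A,B)\big),$$ where $N=2mn$ is the size of $L_{(\bm\lambda,\nu)}(\bm A,B)$.
   Context: Let $n,d,m$ be positive integers. Fix Hermitian matrices $\Gamma_1,\dots,\Gamma_d\in M_{2m}(\mathbb{C})$ with $\Gamma_i^2=I_{2m}$ and $\Gamma_i\Gamma_j=-\Gamma_j\Gamma_i$ for $i\neq j$ (a Clifford representation; the paper uses a specific one built from Pauli matrices). Write $P=\begin{bmatrix} I_m&0\\0&0_m\end{bmatrix}$ and $Q=\begin{bmatrix}0_m&0\\0&I_m\end{bmatrix}$ in $M_{2m}(\mathbb{C})$. For a $d$-tuple $\bm A=(A_1,\dots,A_d)$ of Hermitian matrices in $M_n(\mathbb{C})$, a matrix $B\in M_n(\mathbb{C})$ (not necessarily Hermitian or normal), and a probe site $(\bm\lambda,\nu)\in\mathbb{R}^d\times\mathbb{C}$, the non-Hermitian spectral localizer is $$L_{(\bm\lambda,\nu)}(\bm A,B)=\sum_{i=1}^d (A_i-\lambda_i I)\otimes\Gamma_i+(B-\nu I)\otimes P-(B-\nu I)^\dagger\otimes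 Q\in M_{2mn}(\mathbb{C}).$$ The Clifford radial gap is $\dot\mu^{C}_{(\bm\lambda,\nu)}(\bm A,B)=\sigma_{\min}\big(L_{(\bm\lambda,\nu)}(\bm A,B)\big)$ and the Clifford linear gap is $\bar\mu^{C}_{(\bm\lambda,\nu)}(\bm A,B)=\min\{|\mathrm{Re}(z)|:z\in\mathrm{Spec}(L_{(\bm\lambda,\nu)}(\bm A,B))\}$. For a square matrix $M$, its deviation from normality is $\Delta(M)=\inf\{\|U\|: M=W(D+U)W^\dagger\text{ a Schur decomposition, } W\text{ unitary}, D\text{ diagonal}, U\text{ strictly upper triangular}\}$. Matrix norms are operator norms. *)

theory Defs
  imports "HOL-Analysis.Analysis"
begin

text \<open>Complex square matrices are indexed by finite types; the Euclidean (l2) norm on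
  complex^'n is the library norm, so the operator norm of M is onorm of the map x -> M *v x.\<close>

definition mat_adj :: "complex^'n^'m \<Rightarrow> complex^'m^'n" where
  "mat_adj M = (\<chi> i j. cnj (M $ j $ i))"

definition hermitian :: "complex^'n^'n \<Rightarrow> bool" where
  "hermitian M \<longleftrightarrow> mat_adj M = M"

definition unitary_mat :: "complex^'n^'n \<Rightarrow> bool" where
  "unitary_mat W \<longleftrightarrow> mat_adj W ** W = mat 1"

definition op_norm :: "complex^'n^'m \<Rightarrow> real" where
  "op_norm M = onorm (\<lambda>x. M *v x)"

definition kron :: "complex^'n^'n \<Rightarrow> complex^'k^'k \<Rightarrow> complex^('n \<times> 'k)^('n \<times> 'k)" where
  "kron A G = (\<chi> p q. A $ fst p $ fst q * G $ snd p $ snd q)"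

definition is_eigenvalue :: "complex^'n^'n \<Rightarrow> complex \<Rightarrow> bool" where
  "is_eigenvalue M z \<longleftrightarrow> (\<exists>v. v \<noteq> 0 \<and> M *v v = z *s v)"

definition spec :: "complex^'n^'n \<Rightarrow> complex set" where
  "spec M = {z. is_eigenvalue M z}"

definition sigma_min :: "complex^'n^'n \<Rightarrow> real" where
  "sigma_min M = sqrt (Min (Re ` spec (mat_adj M ** M)))"

definition diagonal_mat :: "complex^'n^'n \<Rightarrow> bool" where
  "diagonal_mat D \<longleftrightarrow> (\<forall>i j. i \<noteq> j \<longrightarrow> D $ i $ j = 0)"

definition strictly_upper :: "('n \<Rightarrow> 'n \<Rightarrow> bool) \<Rightarrow> complex^'n^'n \<Rightarrow> bool" where
  "strictly_upper lt U \<longleftrightarrow> (\<forall>i j. \<not> lt i j \<longrightarrow> U $ i $ j = 0)"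

text \<open>Deviation from normality (Henrici), with "upper triangular" taken w.r.t. the strict
  linear order less on the index type.\<close>
definition dev_normality :: "('n \<Rightarrow> 'n \<Rightarrow> bool) \<Rightarrow> complex^'n^'n \<Rightarrow> real" where
  "dev_normality lt M = Inf {op_norm U | U. \<exists>W D. unitary_mat W \<and> diagonal_mat D \<and>
      strictly_upper lt U \<and> M = W ** (D + U) ** mat_adj W}"

text \<open>Lexicographic strict order on the index type 'n x bool x 'm of the localizer
  (False < True), matching the block structure of the Kronecker product.\<close>
definition lex_less3 :: "('n::linorder \<times> bool \<times> 'm::linorder) \<Rightarrow> ('n \<times> bool \<times> 'm) \<Rightarrow> bool" where
  "lex_less3 p q \<longleftrightarrow> (case (p, q) of ((a, b, c), (a', b', c')) \<Rightarrow>
      a < a' \<or> (a = a' \<and> (b < b' \<or> (b = b' \<and> c < c'))))"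

text \<open>Clifford representation on C^(2m), indexed by bool x 'm; the block with first
  component False comes first in the (lexicographic) order.\<close>
definition P_proj :: "complex^(bool \<times> ('m::finite))^(bool \<times> 'm)" where
  "P_proj = (\<chi> p q. if p = q \<and> \<not> fst p then 1 else 0)"

definition Q_proj :: "complex^(bool \<times> ('m::finite))^(bool \<times> 'm)" where
  "Q_proj = (\<chi> p q. if p = q \<and> fst p then 1 else 0)"

definition clifford_rep :: "nat \<Rightarrow> (nat \<Rightarrow> complex^(bool \<times> ('m::finite))^(bool \<times> 'm)) \<Rightarrow> bool" where
  "clifford_rep d \<Gamma> \<longleftrightarrow> (\<forall>i<d. hermitian (\<Gamma> i) \<and> \<Gamma> i ** \<Gamma> i = mat 1) \<and>
     (\<forall>i<d. \<forall>j<d. i \<noteq> j \<longrightarrow> \<Gamma> i ** \<Gamma> j = - (\<Gamma> j ** \<Gamma> i))"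

text \<open>Non-Hermitian spectral localizer; A, Gamma, lambda indexed by 0..d-1.\<close>
definition localizer ::
  "nat \<Rightarrow> (nat \<Rightarrow> complex^(bool \<times> ('m::finite))^(bool \<times> 'm)) \<Rightarrow> (nat \<Rightarrow> complex^('n::finite)^'n) \<Rightarrow> complex^'n^'n
   \<Rightarrow> (nat \<Rightarrow> real) \<Rightarrow> complex \<Rightarrow> complex^('n \<times> bool \<times> 'm)^('n \<times> bool \<times> 'm)" where
  "localizer d \<Gamma> A B lam \<nu> =
     (\<Sum>i<d. kron (A i - mat (complex_of_real (lam i))) (\<Gamma> i))
     + kron (B - mat \<nu>) P_proj - kron (mat_adj (B - mat \<nu>)) Q_proj"

definition clifford_radial_gap where
  "clifford_radial_gap d \<Gamma> A B lam \<nu> = sigma_min (localizer d \<Gamma> A B lam \<nu>)"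

definition clifford_linear_gap where
  "clifford_linear_gap d \<Gamma> A B lam \<nu> =
     Min ((\<lambda>z. \<bar>Re z\<bar>) ` spec (localizer d \<Gamma> A B lam \<nu>))"

end

theory Submission
  imports Defs "Jordan_Normal_Form.Spectral_Radius"
begin

text \<open>For an eigenvalue \<open>z\<close> of the localizer \<open>L\<close> with eigenvector \<open>v\<close>,
  \<open>2 \<bar>Im z\<bar> \<parallel>v\<parallel>\<^sup>2 = \<bar>\<langle>v, (L - L\<^sup>\<dagger>) v\<rangle>\<bar>\<close>, and \<open>L - L\<^sup>\<dagger> = X \<otimes> I\<close> with
  \<open>X = (B - \<nu>) - (B - \<nu>)\<^sup>\<dagger>\<close>, because the Hermitian Clifford terms cancel. So the spectrum lies
  within \<open>\<parallel>X\<parallel>\<close> of the real axis, and as \<open>\<sigma>\<^sub>m\<^sub>i\<^sub>n(L) \<le> \<bar>z\<bar>\<close> for every eigenvalue,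
  the radial gap exceeds the linear gap by at most \<open>\<parallel>X\<parallel>\<close>. Conversely, if
  \<open>L = W (D + U) W\<^sup>\<dagger>\<close> is a Schur form, the eigenvalues of \<open>L\<close> are the diagonal entries
  of \<open>D\<close>, and \<open>\<parallel>D y\<parallel> \<le> \<parallel>(D + U) y\<parallel> + \<parallel>U\<parallel>\<close> for a unit vector \<open>y\<close> realising
  \<open>\<sigma>\<^sub>m\<^sub>i\<^sub>n(L)\<close> shows that the linear gap exceeds the radial gap by at most \<open>\<parallel>U\<parallel>\<close>;
  taking the infimum over Schur forms gives the deviation from normality.\<close>

text \<open>Jordan_Normal_Form reuses these names; restore their HOL-Analysis meaning.\<close>
no_notation Matrix.vec_index (infixl "$" 100)
hide_const (open) Matrix.mat Matrix.vec Matrix.row Matrix.col Determinant.det Matrix.diagonal_mat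

lemmas cvec_eq_iff = Finite_Cartesian_Product.vec_eq_iff
lemmas cmat_def = Finite_Cartesian_Product.mat_def

section \<open>Complex inner product, adjoints and unitary matrices\<close>

definition cinner :: "complex^'k \<Rightarrow> complex^'k \<Rightarrow> complex" where
  "cinner x y = (\<Sum>i\<in>UNIV. cnj (x$i) * y$i)"

lemma power2_norm_vec_eq_sum: "(norm (x::complex^'k))^2 = (\<Sum>i\<in>UNIV. (norm (x$i))^2)"
  unfolding norm_vec_def L2_set_def by (simp add: sum_nonneg)

lemma cinner_self: "cinner x x = complex_of_real ((norm x)^2)"
  unfolding cinner_def power2_norm_vec_eq_sum of_real_sum
  by (rule sum.cong) (auto, metis complex_norm_square mult.commute of_real_power)

lemma cinner_diff_right: "cinner x (y - z) = cinner x y - cinner x z"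
  unfolding cinner_def by (simp add: sum_subtractf algebra_simps)

lemma cinner_diff_left: "cinner (x - y) z = cinner x z - cinner y z"
  unfolding cinner_def by (simp add: sum_subtractf algebra_simps)

lemma cinner_smult_right: "cinner x (c *s y) = c * cinner x y"
  unfolding cinner_def by (simp add: sum_distrib_left mult_ac)

lemma cinner_smult_left: "cinner (c *s x) y = cnj c * cinner x y"
  unfolding cinner_def by (simp add: sum_distrib_left mult_ac)

lemma cinner_axis_left: "cinner (axis k 1) v = v $ k"
  unfolding cinner_def axis_def
  by (simp add: if_distrib[of cnj] if_distrib[of "\<lambda>a. a * _"] cong: if_cong)

lemma cinner_axis_right: "cinner v (axis k 1) = cnj (v $ k)"
  unfolding cinner_def axis_def by (simp add: if_distrib[of "(*) _"] cong: if_cong)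

lemma norm_cinner_le: "norm (cinner x y) \<le> norm x * norm y"
proof -
  have "norm (cinner x y) \<le> (\<Sum>i\<in>UNIV. norm (x$i) * norm (y$i))"
    unfolding cinner_def by (rule order_trans[OF norm_sum]) (simp add: norm_mult)
  also have "\<dots> \<le> L2_set (\<lambda>i. norm (x$i)) UNIV * L2_set (\<lambda>i. norm (y$i)) UNIV"
    using L2_set_mult_ineq[of "\<lambda>i. norm (x$i)" "\<lambda>i. norm (y$i)" UNIV] by simp
  finally show ?thesis by (simp add: norm_vec_def)
qed

lemma cinner_matrix_vector_mult: "cinner x (M *v y) = cinner (mat_adj M *v x) y"
proof -
  have "cinner x (M *v y) = (\<Sum>i\<in>UNIV. \<Sum>j\<in>UNIV. cnj (x$i) * M$i$j * y$j)"
    unfolding cinner_def matrix_vector_mult_def by (simp add: sum_distrib_left mult_ac)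
  also have "\<dots> = (\<Sum>j\<in>UNIV. \<Sum>i\<in>UNIV. cnj (x$i) * M$i$j * y$j)"
    by (rule sum.swap)
  also have "\<dots> = cinner (mat_adj M *v x) y"
    unfolding cinner_def matrix_vector_mult_def mat_adj_def
    by (simp add: sum_distrib_right sum_distrib_left mult_ac)
  finally show ?thesis .
qed

lemma norm_smult_vec: "norm (c *s (x::complex^'k)) = norm c * norm x"
  unfolding norm_vec_def by (simp add: norm_mult L2_set_right_distrib)

lemma norm_axis_1: "norm (axis k (1::complex) :: complex^'k) = 1"
proof -
  have "(norm (axis k (1::complex) :: complex^'k))^2 = 1"
    using cinner_self[of "axis k 1 :: complex^'k"] cinner_axis_left[of k "axis k 1"]
    by (simp flip: of_real_eq_1_iff)
  then show ?thesis by (simp add: power2_eq_1_iff)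
qed

lemma matrix_vector_mult_smult: "(A::complex^'k^'l) *v (c *s x) = c *s (A *v x)"
  by (simp add: matrix_vector_mult_def cvec_eq_iff sum_distrib_left mult_ac)

lemma mat_matrix_vector_mult: "(mat c :: complex^'k^'k) *v x = c *s x"
  by (simp add: cvec_eq_iff matrix_vector_mult_def cmat_def if_distrib[of "\<lambda>a. a * _"] if_distrib[of "\<lambda>a. _ * a"] cong: if_cong)

lemma matrix_vector_mult_axis: "((A::complex^'k^'l) *v axis j 1) $ i = A $ i $ j"
  by (simp add: matrix_vector_mult_def axis_def if_distrib[of "(*) _"] cong: if_cong)

lemma diagonal_matrix_vector_mult:
  "diagonal_mat \<Lambda> \<Longrightarrow> ((\<Lambda>::complex^'k^'k) *v y) $ i = \<Lambda>$i$i * y$i"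
  unfolding Defs.diagonal_mat_def matrix_vector_mult_def
  by (subst sum.remove[of _ i]) (auto intro!: sum.neutral)

lemma mat_adj_adj [simp]: "mat_adj (mat_adj M) = M"
  unfolding mat_adj_def by (simp add: cvec_eq_iff)

lemma mat_adj_mult: "mat_adj (A ** B) = mat_adj B ** mat_adj A"
  unfolding mat_adj_def matrix_matrix_mult_def by (simp add: cvec_eq_iff mult.commute)

lemma mat_adj_add: "mat_adj (A + B) = mat_adj A + mat_adj B"
  unfolding mat_adj_def by (simp add: cvec_eq_iff)

lemma mat_adj_diff: "mat_adj (A - B) = mat_adj A - mat_adj B"
  unfolding mat_adj_def by (simp add: cvec_eq_iff)

lemma mat_adj_mat: "mat_adj (mat c :: complex^'k^'k) = mat (cnj c)"
  unfolding mat_adj_def by (simp add: cvec_eq_iff cmat_def)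

lemma mat_adj_sum: "mat_adj (\<Sum>i\<in>I. f i) = (\<Sum>i\<in>I. mat_adj (f i))"
  by (induction I rule: infinite_finite_induct) (auto simp: mat_adj_add mat_adj_def cvec_eq_iff)

lemma norm_matrix_vector_mult_le: "norm ((M::complex^'k^'l) *v x) \<le> op_norm M * norm x"
  unfolding op_norm_def by (rule onorm) simp

lemma op_norm_nonneg: "0 \<le> op_norm (M::complex^'k^'l)"
  unfolding op_norm_def by (rule onorm_pos_le) simp

lemma unitary_mat_right: "unitary_mat W \<Longrightarrow> W ** mat_adj W = mat 1"
  unfolding unitary_mat_def using matrix_left_right_inverse by blast

lemma unitary_mat_adj: "unitary_mat W \<Longrightarrow> unitary_mat (mat_adj W)"
  unfolding unitary_mat_def by (simp add: unitary_mat_right[unfolded unitary_mat_def])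

lemma unitary_mat_mult: "unitary_mat W \<Longrightarrow> unitary_mat Y \<Longrightarrow> unitary_mat (W ** Y)"
  unfolding unitary_mat_def mat_adj_mult by (metis matrix_mul_assoc matrix_mul_lid)

lemma unitary_mat_1: "unitary_mat (mat 1 :: complex^'k^'k)"
  unfolding unitary_mat_def by (simp add: mat_adj_mat)

lemma norm_unitary_mult: assumes "unitary_mat W" shows "norm (W *v x) = norm x"
proof -
  have "cinner (W *v x) (W *v x) = cinner x x"
    by (simp add: cinner_matrix_vector_mult matrix_vector_mul_assoc assms[unfolded unitary_mat_def])
  then have "(norm (W *v x))^2 = (norm x)^2" unfolding cinner_self of_real_eq_iff .
  then show ?thesis by (simp add: power2_eq_iff_nonneg)
qed

section \<open>Householder reflections\<close>

definition reflection :: "complex^'k \<Rightarrow> complex^'k^'k" where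
  "reflection w = mat 1 - (\<chi> i j. complex_of_real (2 / (norm w)^2) * w$i * cnj (w$j))"

lemma reflection_apply:
  "reflection w *v x = x - (complex_of_real (2 / (norm w)^2) * cinner w x) *s w"
  by (simp add: cvec_eq_iff reflection_def matrix_vector_mult_diff_rdistrib mat_matrix_vector_mult)
     (simp add: matrix_vector_mult_def cinner_def sum_distrib_left sum_divide_distrib mult_ac)

lemma mat_adj_reflection: "mat_adj (reflection w) = reflection w"
  unfolding reflection_def mat_adj_def by (simp add: cvec_eq_iff cmat_def mult_ac)

lemma reflection_involutive: "reflection w ** reflection w = mat 1"
proof (rule matrix_eq[THEN iffD2], intro allI)
  fix x
  define c where "c = complex_of_real (2 / (norm w)^2)"
  have apply_c: "reflection w *v y = y - (c * cinner w y) *s w" for y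
    unfolding c_def by (rule reflection_apply)
  have "cinner w (reflection w *v x) = - cinner w x"
  proof (cases "w = 0")
    case True
    then show ?thesis by (simp add: cinner_def)
  next
    case False
    then have "c * cinner w w = 2" by (simp add: c_def cinner_self flip: of_real_mult)
    then show ?thesis
      unfolding apply_c cinner_diff_right cinner_smult_right by (simp add: algebra_simps)
  qed
  then show "(reflection w ** reflection w) *v x = mat 1 *v x"
    by (simp add: matrix_vector_mul_assoc[symmetric] apply_c[of "reflection w *v x"])
       (simp add: apply_c)
qed

lemma unitary_reflection: "unitary_mat (reflection w)"
  unfolding unitary_mat_def mat_adj_reflection reflection_involutive ..

lemma reflection_orthogonal: "cinner w v = 0 \<Longrightarrow> reflection w *v v = v"
  by (simp add: reflection_apply)

lemma reflection_swap:
  assumes "norm a = norm b" and "cinner a b = cinner b a"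
  shows "reflection (a - b) *v a = b"
proof (cases "a = b")
  case True
  then show ?thesis by (simp add: reflection_apply)
next
  case False
  have "cinner a a = cinner b b" using assms(1) by (simp add: cinner_self)
  then have "cinner (a - b) (a - b) = 2 * (cinner a a - cinner b a)"
    using assms(2) by (simp add: cinner_diff_left cinner_diff_right)
  then have "complex_of_real ((norm (a - b))^2) = 2 * (cinner a a - cinner b a)"
    by (simp only: cinner_self)
  moreover have "(norm (a - b))^2 \<noteq> 0" using False by simp
  ultimately have "complex_of_real (2 / (norm (a - b))^2) * cinner (a - b) a = 1"
    by (simp add: cinner_diff_left field_simps)
  then show ?thesis by (simp add: reflection_apply)
qed

lemma householder_reflection:
  fixes u :: "complex^'k"
  assumes "k \<in> R" and "u \<noteq> 0" and u_R: "\<forall>i. i \<notin> R \<longrightarrow> u$i = 0"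
  obtains Y \<alpha> where "unitary_mat Y" "mat_adj Y = Y" "\<alpha> \<noteq> 0" "Y *v axis k 1 = \<alpha> *s u"
    "\<forall>v. (\<forall>i\<in>R. v$i = 0) \<longrightarrow> Y *v v = v"
proof -
  define a where "a = (if u$k = 0 then 1 else cnj (u$k) / complex_of_real (cmod (u$k)))"
  define \<alpha> where "\<alpha> = a / complex_of_real (norm u)"
  define b where "b = \<alpha> *s u"
  have "norm a = 1" by (auto simp: a_def norm_divide)
  then have "norm b = 1" and "\<alpha> \<noteq> 0"
    using \<open>u \<noteq> 0\<close> by (auto simp: b_def \<alpha>_def norm_smult_vec norm_divide)
  text \<open>The phase \<open>a\<close> makes \<open>b$k\<close> real, as \<open>reflection_swap\<close> requires.\<close>
  have "cnj (b$k) = b$k"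
  proof (cases "u$k = 0")
    case False
    then have "b$k = complex_of_real (cmod (u$k) / norm u)"
      by (simp add: b_def \<alpha>_def a_def complex_norm_square[symmetric] power2_eq_square
          mult.commute[of "cnj _"])
    then show ?thesis by simp
  qed (simp add: b_def)
  then have swap: "reflection (axis k 1 - b) *v axis k 1 = b"
    by (intro reflection_swap) (simp_all add: norm_axis_1 \<open>norm b = 1\<close> cinner_axis_left cinner_axis_right)
  have fix_R: "reflection (axis k 1 - b) *v v = v" if "\<forall>i\<in>R. v$i = 0" for v
  proof (rule reflection_orthogonal)
    have "cnj ((axis k 1 - b)$i) * v$i = 0" for i
      using that u_R \<open>k \<in> R\<close> by (cases "i \<in> R") (auto simp: b_def axis_def)
    then show "cinner (axis k 1 - b) v = 0" by (simp add: cinner_def)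
  qed
  show ?thesis
    by (rule that[OF unitary_reflection mat_adj_reflection \<open>\<alpha> \<noteq> 0\<close>])
       (use swap fix_R in \<open>auto simp: b_def\<close>)
qed

section \<open>Schur decomposition\<close>

text \<open>The fundamental theorem of algebra enters only here, through the characteristic
  polynomial of the compression of \<open>T\<close> to \<open>R\<close>, a Jordan_Normal_Form matrix indexed by
  \<open>{0..<card R}\<close>.\<close>
lemma compression_eigenvector:
  fixes T :: "complex^'k^'k" and R :: "'k set"
  assumes "R \<noteq> {}"
  obtains \<mu> u where "u \<noteq> 0" "\<forall>i. i \<notin> R \<longrightarrow> u$i = 0" "\<forall>i\<in>R. (T *v u)$i = \<mu> * u$i"
proof -
  define r where "r = card R"
  obtain g where g: "bij_betw g {0..<r} R"
    using ex_bij_betw_nat_finite r_def finite by blast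
  have "r > 0" using assms by (simp add: r_def card_gt_0_iff)
  define A where "A = Matrix.mat r r (\<lambda>(a,b). T $ g a $ g b)"
  have A: "A \<in> carrier_mat r r" by (simp add: A_def)
  obtain \<mu> where "\<mu> \<in> spectrum A"
    using spectrum_non_empty[OF A \<open>r > 0\<close>] by blast
  then obtain x where "eigenvector A x \<mu>"
    unfolding spectrum_def eigenvalue_def by blast
  then have x: "x \<in> carrier_vec r" "x \<noteq> 0\<^sub>v r" "A *\<^sub>v x = \<mu> \<cdot>\<^sub>v x"
    unfolding eigenvector_def using A by auto
  define u where "u = (\<chi> i. if i \<in> R then Matrix.vec_index x (the_inv_into {0..<r} g i) else 0)"
  have u_g: "u $ g b = Matrix.vec_index x b" if "b < r" for b
    using that g by (auto simp: u_def bij_betw_def the_inv_into_f_f)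
  have "u \<noteq> 0"
  proof
    assume "u = 0"
    then have "x = 0\<^sub>v r" using x(1) u_g by (intro eq_vecI) auto
    with x(2) show False by simp
  qed
  moreover have "\<forall>i. i \<notin> R \<longrightarrow> u$i = 0" by (simp add: u_def)
  moreover have "(T *v u) $ i = \<mu> * u $ i" if "i \<in> R" for i
  proof -
    from g \<open>i \<in> R\<close> obtain b where b: "b < r" "i = g b"
      by (auto simp: bij_betw_def image_iff)
    have "(T *v u) $ i = (\<Sum>j\<in>R. T $ i $ j * u $ j)"
      unfolding matrix_vector_mult_def vec_lambda_beta
      by (rule sum.mono_neutral_right) (auto simp: u_def)
    also have "\<dots> = (\<Sum>c\<in>{0..<r}. T $ g b $ g c * Matrix.vec_index x c)"
      using sum.reindex_bij_betw[OF g, of "\<lambda>j. T $ i $ j * u $ j"] b u_g by simp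
    also have "\<dots> = Matrix.vec_index (A *\<^sub>v x) b"
      using b x(1) by (simp add: A_def scalar_prod_def)
    also have "\<dots> = \<mu> * u $ i" using x(1,3) b u_g by simp
    finally show ?thesis .
  qed
  ultimately show ?thesis using that by blast
qed

text \<open>Triangularity is taken with respect to a ranking \<open>r\<close> of the index type: the order
  \<open>lex_less3\<close> of the localizer indices is neither an order on \<open>nat\<close> nor the componentwise
  order that HOL-Analysis puts on pairs.\<close>
definition upper_triangular_wrt :: "('k \<Rightarrow> nat) \<Rightarrow> complex^'k^'k \<Rightarrow> bool" where
  "upper_triangular_wrt r T \<longleftrightarrow> (\<forall>i j. r j < r i \<longrightarrow> T$i$j = 0)"

lemma schur_step:
  fixes T :: "complex^'k^'k" and r :: "'k \<Rightarrow> nat"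
  assumes "inj r" and "r k = n" and tri: "\<forall>i j. r j < n \<longrightarrow> r j < r i \<longrightarrow> T$i$j = 0"
  obtains Y where "unitary_mat Y" "mat_adj Y = Y"
    "\<forall>i j. r j \<le> n \<longrightarrow> r j < r i \<longrightarrow> (Y ** T ** Y)$i$j = 0"
proof -
  define R where "R = {i. n \<le> r i}"
  have "k \<in> R" using \<open>r k = n\<close> by (simp add: R_def)
  obtain \<mu> u where "u \<noteq> 0" and u_R: "\<forall>i. i \<notin> R \<longrightarrow> u$i = 0"
    and Tu: "\<forall>i\<in>R. (T *v u)$i = \<mu> * u$i"
    by (rule compression_eigenvector[of R T]) (use \<open>k \<in> R\<close> in auto)
  obtain Y \<alpha> where Y: "unitary_mat Y" "mat_adj Y = Y" and "\<alpha> \<noteq> 0"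
    and Y_k: "Y *v axis k 1 = \<alpha> *s u" and Y_fix: "\<forall>v. (\<forall>i\<in>R. v$i = 0) \<longrightarrow> Y *v v = v"
    by (rule householder_reflection[OF \<open>k \<in> R\<close> \<open>u \<noteq> 0\<close> u_R])
  have YY: "Y *v (Y *v x) = x" for x
    using Y unfolding unitary_mat_def by (simp add: matrix_vector_mul_assoc)
  have entry: "(Y ** T ** Y)$i$j = (Y *v (T *v (Y *v axis j 1)))$i" for i j
    by (simp only: matrix_vector_mul_assoc matrix_vector_mult_axis matrix_mul_assoc)
  have triangular: "(Y ** T ** Y)$i$j = 0" if "r j \<le> n" "r j < r i" for i j
  proof (cases "r j < n")
    case True
    have "\<forall>l\<in>R. axis j (1::complex) $ l = 0" using True by (auto simp: R_def axis_def)
    moreover have "\<forall>l\<in>R. (T *v axis j 1)$l = 0"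
      using tri True by (auto simp: R_def matrix_vector_mult_axis)
    ultimately show ?thesis
      using tri True \<open>r j < r i\<close> Y_fix by (simp add: entry matrix_vector_mult_axis)
  next
    case False
    with \<open>r j \<le> n\<close> have "j = k" using \<open>r k = n\<close> \<open>inj r\<close> by (auto dest: injD)
    define z where "z = T *v u - \<mu> *s u"
    have z_R: "\<forall>l\<in>R. z$l = 0" using Tu by (simp add: z_def)
    text \<open>Column \<open>k\<close> becomes \<open>\<alpha> z + \<mu> e\<^sub>k\<close>, and \<open>z\<close> vanishes below the diagonal.\<close>
    have Yu: "\<alpha> *s (Y *v u) = axis k 1"
      using YY[of "axis k 1"] unfolding Y_k matrix_vector_mult_smult .
    have "Y *v (T *v (Y *v axis k 1)) = \<alpha> *s (Y *v (z + \<mu> *s u))"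
      by (simp add: Y_k z_def matrix_vector_mult_smult)
    also have "\<dots> = \<alpha> *s z + \<mu> *s (\<alpha> *s (Y *v u))"
      using Y_fix z_R
      by (simp add: matrix_vector_right_distrib matrix_vector_mult_smult vector_add_ldistrib
          vector_smult_assoc mult.commute)
    finally have "Y *v (T *v (Y *v axis k 1)) = \<alpha> *s z + \<mu> *s axis k 1"
      by (simp only: Yu)
    moreover have "i \<in> R" "i \<noteq> k" using \<open>r j < r i\<close> \<open>r k = n\<close> \<open>j = k\<close> by (auto simp: R_def)
    ultimately show ?thesis using z_R by (simp add: entry \<open>j = k\<close> axis_def)
  qed
  show ?thesis
    by (rule that[OF Y]) (simp add: triangular)
qed

lemma schur_prefix:
  fixes M :: "complex^'k^'k" and r :: "'k \<Rightarrow> nat"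
  assumes "inj r"
  shows "\<exists>W. unitary_mat W \<and> (\<forall>i j. r j < n \<longrightarrow> r j < r i \<longrightarrow> (mat_adj W ** M ** W)$i$j = 0)"
proof (induction n)
  case 0
  show ?case using unitary_mat_1 by blast
next
  case (Suc n)
  then obtain W where W: "unitary_mat W"
    and tri: "\<forall>i j. r j < n \<longrightarrow> r j < r i \<longrightarrow> (mat_adj W ** M ** W)$i$j = 0" by blast
  show ?case
  proof (cases "n \<in> range r")
    case True
    then obtain k where "r k = n" by auto
    from schur_step[OF \<open>inj r\<close> this tri] obtain Y where Y: "unitary_mat Y" "mat_adj Y = Y"
      and tri': "\<forall>i j. r j \<le> n \<longrightarrow> r j < r i \<longrightarrow> (Y ** (mat_adj W ** M ** W) ** Y)$i$j = 0" .
    have "mat_adj (W ** Y) ** M ** (W ** Y) = Y ** (mat_adj W ** M ** W) ** Y"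
      by (simp only: mat_adj_mult Y(2) matrix_mul_assoc)
    then show ?thesis using unitary_mat_mult[OF W Y(1)] tri' by (auto simp: less_Suc_eq_le)
  next
    case False
    then have "r j < Suc n \<Longrightarrow> r j < n" for j by (auto simp: less_Suc_eq)
    then show ?thesis using W tri by blast
  qed
qed

theorem schur_decomposition:
  fixes M :: "complex^'k^'k" and r :: "'k \<Rightarrow> nat"
  assumes "inj r"
  obtains W T where "unitary_mat W" "upper_triangular_wrt r T" "M = W ** T ** mat_adj W"
proof -
  obtain W where W: "unitary_mat W"
    and tri: "\<forall>i j. r j < Suc (Max (range r)) \<longrightarrow> r j < r i \<longrightarrow> (mat_adj W ** M ** W)$i$j = 0"
    using schur_prefix[OF assms] by blast
  have "upper_triangular_wrt r (mat_adj W ** M ** W)"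
    unfolding upper_triangular_wrt_def using tri by (simp add: le_imp_less_Suc)
  moreover have "W ** (mat_adj W ** M ** W) ** mat_adj W = (W ** mat_adj W) ** M ** (W ** mat_adj W)"
    by (simp add: matrix_mul_assoc)
  then have "M = W ** (mat_adj W ** M ** W) ** mat_adj W"
    using unitary_mat_right[OF W] by simp
  ultimately show ?thesis using that W by blast
qed

section \<open>Spectra and singular values\<close>

lemma permutation_decreases_rank:
  fixes r :: "'k::finite \<Rightarrow> nat"
  assumes "inj r" and "p permutes UNIV" and "p \<noteq> id"
  shows "\<exists>i. r (p i) < r i"
proof (rule ccontr)
  assume "\<nexists>i. r (p i) < r i"
  then have le: "r i \<le> r (p i)" for i by (simp add: not_less)
  have "sum r UNIV = sum (r \<circ> p) UNIV"
    using sum.permute[OF assms(2), of r] .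
  then have "r i = (r \<circ> p) i" for i
    by (rule sum_mono_inv) (simp_all add: le)
  then have "p i = i" for i
    using \<open>inj r\<close> by (simp add: inj_eq)
  then have "p = id" by auto
  with assms(3) show False ..
qed

lemma det_upper_triangular_wrt:
  fixes A :: "complex^'k^'k"
  assumes "inj r" and "upper_triangular_wrt r A"
  shows "det A = (\<Prod>i\<in>UNIV. A$i$i)"
proof -
  have "of_int (sign p) * (\<Prod>i\<in>UNIV. A$i$p i) = 0" if p: "p permutes UNIV" "p \<noteq> id" for p
  proof -
    obtain i where "r (p i) < r i" using permutation_decreases_rank[OF assms(1) p] ..
    then have "A$i$p i = 0" using assms(2) by (simp add: upper_triangular_wrt_def)
    then show ?thesis by (auto simp: prod_zero_iff)
  qed
  then have "det A = (\<Sum>p\<in>{id}. of_int (sign p) * (\<Prod>i\<in>UNIV. A$i$p i))"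
    unfolding Determinants.det_def
    by (intro sum.mono_neutral_right) (auto simp: permutes_id finite_permutations)
  then show ?thesis by (simp add: sign_id)
qed

lemma spec_upper_triangular_wrt:
  fixes T :: "complex^'k^'k"
  assumes "inj r" and "upper_triangular_wrt r T"
  shows "spec T = range (\<lambda>k. T$k$k)"
proof -
  have "is_eigenvalue T z \<longleftrightarrow> (\<exists>v. v \<noteq> 0 \<and> (T - mat z) *v v = 0)" for z
    unfolding is_eigenvalue_def by (simp add: matrix_vector_mult_diff_rdistrib mat_matrix_vector_mult)
  also have "\<dots> z \<longleftrightarrow> det (T - mat z) = 0" for z
    using matrix_left_invertible_ker[of "T - mat z"] invertible_det_nz[of "T - mat z"]
      invertible_left_inverse[of "T - mat z"] by blast
  also have "\<dots> z \<longleftrightarrow> (\<exists>k. z = T$k$k)" for z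
  proof -
    have "upper_triangular_wrt r (T - mat z)"
      using assms(2) \<open>inj r\<close> by (auto simp: upper_triangular_wrt_def cmat_def dest: injD)
    then show ?thesis by (auto simp: det_upper_triangular_wrt[OF assms(1)] cmat_def)
  qed
  finally show ?thesis unfolding spec_def by auto
qed

lemma is_eigenvalue_unitary_similar:
  assumes "unitary_mat W" and "is_eigenvalue T z"
  shows "is_eigenvalue (W ** T ** mat_adj W) z"
proof -
  obtain v where "v \<noteq> 0" and "T *v v = z *s v"
    using assms(2) unfolding is_eigenvalue_def by blast
  have "(W ** T ** mat_adj W) *v (W *v v) = W *v (T *v ((mat_adj W ** W) *v v))"
    by (simp only: matrix_vector_mul_assoc matrix_mul_assoc)
  then have "(W ** T ** mat_adj W) *v (W *v v) = z *s (W *v v)"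
    using assms(1) \<open>T *v v = z *s v\<close> by (simp add: unitary_mat_def matrix_vector_mult_smult)
  moreover have "W *v v \<noteq> 0"
    using \<open>v \<noteq> 0\<close> norm_unitary_mult[OF assms(1), of v] by auto
  ultimately show ?thesis unfolding is_eigenvalue_def by blast
qed

lemma spec_unitary_similar:
  assumes "unitary_mat W"
  shows "spec (W ** T ** mat_adj W) = spec T"
proof -
  have "mat_adj W ** (W ** T ** mat_adj W) ** mat_adj (mat_adj W)
      = (mat_adj W ** W) ** T ** (mat_adj W ** W)"
    by (simp add: matrix_mul_assoc)
  then have "mat_adj W ** (W ** T ** mat_adj W) ** mat_adj (mat_adj W) = T"
    using assms by (simp add: unitary_mat_def)
  then show ?thesis
    using is_eigenvalue_unitary_similar[OF assms]
      is_eigenvalue_unitary_similar[OF unitary_mat_adj[OF assms], of "W ** T ** mat_adj W"]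
    unfolding spec_def by auto
qed

lemma finite_spec: "finite (spec M)" and spec_nonempty: "spec M \<noteq> {}"
proof -
  obtain W T where "unitary_mat W" "upper_triangular_wrt to_nat T" "M = W ** T ** mat_adj W"
    using schur_decomposition[OF inj_to_nat] .
  then have "spec M = range (\<lambda>k. T$k$k)"
    by (simp add: spec_unitary_similar spec_upper_triangular_wrt[OF inj_to_nat])
  then show "finite (spec M)" "spec M \<noteq> {}" by auto
qed

lemma hermitian_diagonalization:
  fixes H :: "complex^'k^'k"
  assumes "hermitian H"
  obtains W \<Lambda> where "unitary_mat W" "diagonal_mat \<Lambda>" "\<forall>i. \<Lambda>$i$i \<in> \<real>"
    "H = W ** \<Lambda> ** mat_adj W"
proof -
  obtain W T where W: "unitary_mat W" and tri: "upper_triangular_wrt to_nat T"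
    and H: "H = W ** T ** mat_adj W"
    using schur_decomposition[OF inj_to_nat] .
  have "mat_adj W ** H ** W = (mat_adj W ** W) ** T ** (mat_adj W ** W)"
    unfolding H by (simp add: matrix_mul_assoc)
  then have "T = mat_adj W ** H ** W" using W by (simp add: unitary_mat_def)
  then have "mat_adj T = T"
    using assms unfolding hermitian_def by (simp add: mat_adj_mult matrix_mul_assoc)
  then have T_cnj: "T$i$j = cnj (T$j$i)" for i j
    by (simp add: mat_adj_def cvec_eq_iff)
  have "T$i$j = 0" if "i \<noteq> j" for i j
  proof (cases "to_nat j < to_nat i")
    case False
    have "to_nat i \<noteq> to_nat j" using that by simp
    with False have "to_nat i < to_nat j" by linarith
    then show ?thesis using tri T_cnj[of i j] by (simp add: upper_triangular_wrt_def)
  qed (use tri in \<open>simp add: upper_triangular_wrt_def\<close>)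
  then have "diagonal_mat T" by (simp add: Defs.diagonal_mat_def)
  moreover have "\<forall>i. T$i$i \<in> \<real>"
    unfolding Reals_cnj_iff using T_cnj by (metis (no_types))
  ultimately show ?thesis using that W H by blast
qed

lemma diagonal_upper_triangular_wrt:
  "diagonal_mat D \<Longrightarrow> inj r \<Longrightarrow> upper_triangular_wrt r D"
  unfolding Defs.diagonal_mat_def upper_triangular_wrt_def by (metis less_irrefl)

lemma cinner_real_diagonal:
  assumes "diagonal_mat \<Lambda>" and "\<forall>i. \<Lambda>$i$i \<in> \<real>"
  shows "cinner y (\<Lambda> *v y) = complex_of_real (\<Sum>i\<in>UNIV. Re (\<Lambda>$i$i) * (cmod (y$i))^2)"
  unfolding cinner_def diagonal_matrix_vector_mult[OF assms(1)] of_real_sum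
proof (rule sum.cong)
  fix i
  have "cnj (y$i) * (\<Lambda>$i$i * y$i) = \<Lambda>$i$i * (cnj (y$i) * y$i)" by (simp add: mult_ac)
  also have "\<dots> = complex_of_real (Re (\<Lambda>$i$i)) * complex_of_real ((cmod (y$i))^2)"
    using assms(2) complex_norm_square[of "y$i"] by (simp add: mult.commute)
  finally show "cnj (y$i) * (\<Lambda>$i$i * y$i) = complex_of_real (Re (\<Lambda>$i$i) * (cmod (y$i))^2)"
    by simp
qed simp

text \<open>\<open>M\<^sup>\<dagger>M = W \<Lambda> W\<^sup>\<dagger>\<close>: the diagonal of \<open>\<Lambda>\<close> holds the squared singular values of \<open>M\<close>.\<close>
lemma sigma_min_diagonal_form:
  fixes M :: "complex^'k^'k"
  obtains W \<Lambda> where "unitary_mat W"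
    "\<forall>x. (norm (M *v x))^2 = (\<Sum>i\<in>UNIV. Re (\<Lambda>$i$i) * (cmod ((mat_adj W *v x)$i))^2)"
    "\<forall>i. 0 \<le> Re (\<Lambda>$i$i)" "sigma_min M = sqrt (Min (range (\<lambda>i. Re (\<Lambda>$i$i))))"
proof -
  have "hermitian (mat_adj M ** M)" unfolding hermitian_def mat_adj_mult by simp
  then obtain W \<Lambda> where W: "unitary_mat W" and \<Lambda>: "diagonal_mat \<Lambda>" "\<forall>i. \<Lambda>$i$i \<in> \<real>"
    and H: "mat_adj M ** M = W ** \<Lambda> ** mat_adj W"
    by (rule hermitian_diagonalization)
  have "spec (mat_adj M ** M) = range (\<lambda>i. \<Lambda>$i$i)"
    unfolding H spec_unitary_similar[OF W]
    by (rule spec_upper_triangular_wrt[OF inj_to_nat diagonal_upper_triangular_wrt[OF \<Lambda>(1) inj_to_nat]])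
  then have sigma: "sigma_min M = sqrt (Min (range (\<lambda>i. Re (\<Lambda>$i$i))))"
    unfolding sigma_min_def by (simp add: image_image)
  have quadratic: "(norm (M *v x))^2 = (\<Sum>i\<in>UNIV. Re (\<Lambda>$i$i) * (cmod ((mat_adj W *v x)$i))^2)" for x
  proof -
    have "complex_of_real ((norm (M *v x))^2) = cinner x ((mat_adj M ** M) *v x)"
      by (simp add: cinner_self cinner_matrix_vector_mult flip: matrix_vector_mul_assoc)
    also have "\<dots> = cinner (mat_adj W *v x) (\<Lambda> *v (mat_adj W *v x))"
      by (simp add: H cinner_matrix_vector_mult flip: matrix_vector_mul_assoc)
    finally show ?thesis unfolding cinner_real_diagonal[OF \<Lambda>] of_real_eq_iff .
  qed
  have "0 \<le> Re (\<Lambda>$k$k)" for k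
  proof -
    have "mat_adj W *v (W *v axis k 1) = axis k 1"
      using W by (simp add: unitary_mat_def matrix_vector_mul_assoc)
    then have "(norm (M *v (W *v axis k 1)))^2 = Re (\<Lambda>$k$k)"
      unfolding quadratic by (simp add: axis_def if_distrib[of cmod] if_distrib[of "\<lambda>a. a^2"]
        if_distrib[of "\<lambda>a. _ * a"] cong: if_cong)
    then show ?thesis by (metis zero_le_power2)
  qed
  then show ?thesis using that W quadratic sigma by blast
qed

lemma sigma_min_mult_norm_le: "sigma_min M * norm x \<le> norm ((M::complex^'k^'k) *v x)"
proof -
  obtain W \<Lambda> where W: "unitary_mat W"
    and quadratic: "\<forall>x. (norm (M *v x))^2 = (\<Sum>i\<in>UNIV. Re (\<Lambda>$i$i) * (cmod ((mat_adj W *v x)$i))^2)"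
    and nonneg: "\<forall>i. 0 \<le> Re (\<Lambda>$i$i)" and sigma: "sigma_min M = sqrt (Min (range (\<lambda>i. Re (\<Lambda>$i$i))))"
    using sigma_min_diagonal_form[of M] by blast
  define \<mu> where "\<mu> = Min (range (\<lambda>i. Re (\<Lambda>$i$i)))"
  have "0 \<le> \<mu>" using nonneg by (simp add: \<mu>_def)
  have "\<mu> * (norm x)^2 = \<mu> * (norm (mat_adj W *v x))^2"
    by (simp add: norm_unitary_mult[OF unitary_mat_adj[OF W]])
  also have "\<dots> = (\<Sum>i\<in>UNIV. \<mu> * (cmod ((mat_adj W *v x)$i))^2)"
    by (simp add: power2_norm_vec_eq_sum[of "mat_adj W *v x"] sum_distrib_left)
  also have "\<dots> \<le> (norm (M *v x))^2"
    unfolding quadratic[rule_format] by (intro sum_mono mult_right_mono) (simp_all add: \<mu>_def)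
  finally have "(sigma_min M * norm x)^2 \<le> (norm (M *v x))^2"
    using \<open>0 \<le> \<mu>\<close> by (simp add: sigma \<mu>_def[symmetric] power_mult_distrib)
  then show ?thesis by (rule power2_le_imp_le) simp
qed

lemma sigma_min_attained: "\<exists>v. norm v = 1 \<and> norm ((M::complex^'k^'k) *v v) = sigma_min M"
proof -
  obtain W \<Lambda> where W: "unitary_mat W"
    and quadratic: "\<forall>x. (norm (M *v x))^2 = (\<Sum>i\<in>UNIV. Re (\<Lambda>$i$i) * (cmod ((mat_adj W *v x)$i))^2)"
    and "\<forall>i. 0 \<le> Re (\<Lambda>$i$i)" and sigma: "sigma_min M = sqrt (Min (range (\<lambda>i. Re (\<Lambda>$i$i))))"
    using sigma_min_diagonal_form[of M] by blast
  have "Min (range (\<lambda>i. Re (\<Lambda>$i$i))) \<in> range (\<lambda>i. Re (\<Lambda>$i$i))"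
    by (rule Min_in) auto
  then obtain k where k: "Min (range (\<lambda>i. Re (\<Lambda>$i$i))) = Re (\<Lambda>$k$k)" by blast
  have "mat_adj W *v (W *v axis k 1) = axis k 1"
    using W by (simp add: unitary_mat_def matrix_vector_mul_assoc)
  then have "(norm (M *v (W *v axis k 1)))^2 = Re (\<Lambda>$k$k)"
    unfolding quadratic[rule_format] by (simp add: axis_def if_distrib[of cmod] if_distrib[of "\<lambda>a. a^2"]
        if_distrib[of "\<lambda>a. _ * a"] cong: if_cong)
  then have "norm (M *v (W *v axis k 1)) = sigma_min M"
    unfolding sigma k by (metis norm_ge_zero real_sqrt_unique)
  moreover have "norm (W *v axis k 1) = 1" by (simp add: norm_unitary_mult[OF W] norm_axis_1)
  ultimately show ?thesis by blast
qed

section \<open>Linear versus radial gap\<close>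

lemma eigenvalue_Im_bound:
  assumes "is_eigenvalue L z" and skew: "\<forall>v. norm ((L - mat_adj L) *v v) \<le> c * norm v"
  shows "2 * \<bar>Im z\<bar> \<le> c"
proof -
  obtain v where "v \<noteq> 0" and Lv: "L *v v = z *s v"
    using assms(1) unfolding is_eigenvalue_def by blast
  define n where "n = norm v"
  have "n > 0" using \<open>v \<noteq> 0\<close> by (simp add: n_def)
  have "cinner v ((L - mat_adj L) *v v) = (z - cnj z) * complex_of_real (n^2)"
    unfolding matrix_vector_mult_diff_rdistrib cinner_diff_right
    by (simp add: Lv cinner_matrix_vector_mult[of v "mat_adj L"] cinner_smult_right
        cinner_smult_left cinner_self n_def algebra_simps)
  then have "2 * \<bar>Im z\<bar> * n^2 = norm (cinner v ((L - mat_adj L) *v v))"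
    by (simp add: complex_diff_cnj norm_mult norm_power)
  also have "\<dots> \<le> n * (c * n)"
    using norm_cinner_le[of v] skew mult_left_mono[OF _ norm_ge_zero]
    unfolding n_def by (meson order_trans)
  finally show ?thesis using \<open>n > 0\<close> by (simp add: power2_eq_square mult_ac)
qed

lemma sigma_min_le_cmod_eigenvalue:
  assumes "is_eigenvalue L z"
  shows "sigma_min L \<le> cmod z"
proof -
  obtain v where "v \<noteq> 0" and "L *v v = z *s v"
    using assms unfolding is_eigenvalue_def by blast
  then have "sigma_min L * norm v \<le> cmod z * norm v"
    using sigma_min_mult_norm_le[of L v] by (simp add: norm_smult_vec)
  then show ?thesis using \<open>v \<noteq> 0\<close> by simp
qed

lemma sigma_min_le_linear_gap:
  assumes "\<forall>v. norm ((L - mat_adj L) *v v) \<le> c * norm v"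
  shows "sigma_min L \<le> Min ((\<lambda>z. \<bar>Re z\<bar>) ` spec L) + c"
proof -
  have "Min ((\<lambda>z. \<bar>Re z\<bar>) ` spec L) \<in> (\<lambda>z. \<bar>Re z\<bar>) ` spec L"
    by (rule Min_in) (simp_all add: finite_spec spec_nonempty)
  then obtain z where "z \<in> spec L" and z_min: "Min ((\<lambda>z. \<bar>Re z\<bar>) ` spec L) = \<bar>Re z\<bar>"
    by (rule imageE)
  then have "is_eigenvalue L z" by (simp add: spec_def)
  have "sigma_min L \<le> cmod z" by (rule sigma_min_le_cmod_eigenvalue) fact
  also have "\<dots> \<le> \<bar>Re z\<bar> + \<bar>Im z\<bar>" by (rule cmod_le)
  also have "\<dots> \<le> Min ((\<lambda>z. \<bar>Re z\<bar>) ` spec L) + c"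
    using z_min eigenvalue_Im_bound[OF \<open>is_eigenvalue L z\<close> assms] by linarith
  finally show ?thesis .
qed

lemma norm_diagonal_mult_ge:
  assumes "diagonal_mat D" and "\<forall>j. c \<le> cmod (D$j$j)" and "0 \<le> c"
  shows "c * norm y \<le> norm ((D::complex^'k^'k) *v y)"
proof -
  have "c * norm y = L2_set (\<lambda>i. c * norm (y$i)) UNIV"
    unfolding norm_vec_def using \<open>0 \<le> c\<close> by (rule L2_set_right_distrib)
  also have "\<dots> \<le> L2_set (\<lambda>i. norm ((D *v y)$i)) UNIV"
    using assms by (intro L2_set_mono)
      (simp_all add: diagonal_matrix_vector_mult norm_mult mult_right_mono)
  finally show ?thesis by (simp add: norm_vec_def)
qed

lemma diagonal_lower_bound_le_sigma_min:
  assumes W: "unitary_mat W" and D: "diagonal_mat D" and "\<forall>j. c \<le> cmod (D$j$j)" and "0 \<le> c"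
    and L: "L = W ** (D + U) ** mat_adj W"
  shows "c \<le> sigma_min L + op_norm U"
proof -
  obtain v where "norm v = 1" and sigma: "norm (L *v v) = sigma_min L"
    using sigma_min_attained by blast
  define y where "y = mat_adj W *v v"
  have "norm y = 1" unfolding y_def norm_unitary_mult[OF unitary_mat_adj[OF W]] by fact
  have "L *v v = W *v ((D + U) *v y)" unfolding L y_def
    by (simp add: matrix_vector_mul_assoc matrix_mul_assoc)
  then have L_y: "norm (L *v v) = norm ((D + U) *v y)" by (simp add: norm_unitary_mult[OF W])
  have "c = c * norm y" using \<open>norm y = 1\<close> by simp
  also have "\<dots> \<le> norm (D *v y)" by (rule norm_diagonal_mult_ge[OF D]) fact+
  also have "D *v y = (D + U) *v y - U *v y" by (simp add: matrix_vector_mult_add_rdistrib)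
  also have "norm \<dots> \<le> norm ((D + U) *v y) + norm (U *v y)" by (rule norm_triangle_ineq4)
  also have "norm (U *v y) \<le> op_norm U"
    using norm_matrix_vector_mult_le[of U y] \<open>norm y = 1\<close> by simp
  finally show ?thesis using L_y sigma by simp
qed

lemma linear_gap_le_sigma_min:
  fixes L W D U :: "complex^'k^'k" and r :: "'k \<Rightarrow> nat"
  assumes "inj r" and W: "unitary_mat W" and D: "diagonal_mat D"
    and U: "strictly_upper (\<lambda>i j. r i < r j) U" and L: "L = W ** (D + U) ** mat_adj W"
  shows "Min ((\<lambda>z. \<bar>Re z\<bar>) ` spec L) \<le> sigma_min L + op_norm U"
proof -
  have U_zero: "r j \<le> r i \<Longrightarrow> U$i$j = 0" for i j
    using U by (simp add: strictly_upper_def not_less)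
  have "upper_triangular_wrt r (D + U)" unfolding upper_triangular_wrt_def
  proof (intro allI impI)
    fix i j assume "r j < r i"
    then have "i \<noteq> j" by auto
    then show "(D + U)$i$j = 0"
      using D U_zero[of j i] \<open>r j < r i\<close> by (simp add: Defs.diagonal_mat_def)
  qed
  moreover have "(D + U)$k$k = D$k$k" for k by (simp add: U_zero)
  ultimately have spec_L: "spec L = range (\<lambda>k. D$k$k)"
    unfolding L spec_unitary_similar[OF W] using spec_upper_triangular_wrt[OF \<open>inj r\<close>] by simp
  define m where "m = Min (range (\<lambda>j. cmod (D$j$j)))"
  have "m \<in> range (\<lambda>j. cmod (D$j$j))" unfolding m_def by (rule Min_in) auto
  then obtain k where k: "m = cmod (D$k$k)" by blast
  have "Min ((\<lambda>z. \<bar>Re z\<bar>) ` spec L) \<le> \<bar>Re (D$k$k)\<bar>"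
    using finite_spec by (intro Min_le) (auto simp: spec_L)
  also have "\<dots> \<le> m" unfolding k by (rule abs_Re_le_cmod)
  also have "m \<le> sigma_min L + op_norm U"
    using diagonal_lower_bound_le_sigma_min[OF W D _ _ L] by (simp add: m_def)
  finally show ?thesis .
qed

lemma upper_triangular_wrt_split:
  assumes "inj r" and "upper_triangular_wrt r T"
  shows "\<exists>D U. diagonal_mat D \<and> strictly_upper (\<lambda>i j. r i < r j) U \<and> T = D + U"
proof (intro exI conjI)
  show "diagonal_mat (\<chi> i j. if i = j then T$i$j else 0)"
    by (simp add: Defs.diagonal_mat_def)
  show "strictly_upper (\<lambda>i j. r i < r j) (\<chi> i j. if r i < r j then T$i$j else 0)"
    by (simp add: strictly_upper_def)
  have "T$i$j = (if i = j then T$i$j else 0) + (if r i < r j then T$i$j else 0)" for i j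
  proof (cases "i = j")
    case False
    then have "r i \<noteq> r j" using \<open>inj r\<close> by (simp add: inj_eq)
    then show ?thesis
      using assms(2) False by (auto simp: upper_triangular_wrt_def linorder_neq_iff)
  qed simp
  then show "T = (\<chi> i j. if i = j then T$i$j else 0) + (\<chi> i j. if r i < r j then T$i$j else 0)"
    by (simp add: cvec_eq_iff)
qed

lemma abs_linear_gap_sub_sigma_min_le:
  fixes L :: "complex^'k^'k" and r :: "'k \<Rightarrow> nat"
  assumes "inj r" and skew: "\<forall>v. norm ((L - mat_adj L) *v v) \<le> c * norm v"
  shows "\<bar>Min ((\<lambda>z. \<bar>Re z\<bar>) ` spec L) - sigma_min L\<bar> \<le> c + dev_normality (\<lambda>i j. r i < r j) L"
proof -
  define S where "S = {op_norm U | U. \<exists>W D. unitary_mat W \<and> diagonal_mat D \<and>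
      strictly_upper (\<lambda>i j. r i < r j) U \<and> L = W ** (D + U) ** mat_adj W}"
  obtain z where "is_eigenvalue L z" using spec_nonempty[of L] unfolding spec_def by blast
  with skew have "0 \<le> c" using eigenvalue_Im_bound by fastforce
  have "S \<noteq> {}"
  proof -
    obtain W T where "unitary_mat W" "upper_triangular_wrt r T" "L = W ** T ** mat_adj W"
      using schur_decomposition[OF assms(1)] .
    then show ?thesis
      unfolding S_def using upper_triangular_wrt_split[OF assms(1)] by blast
  qed
  moreover have "\<bar>Min ((\<lambda>z. \<bar>Re z\<bar>) ` spec L) - sigma_min L\<bar> - c \<le> u" if "u \<in> S" for u
  proof -
    obtain U W D where "u = op_norm U" and "unitary_mat W" "diagonal_mat D"
      "strictly_upper (\<lambda>i j. r i < r j) U" "L = W ** (D + U) ** mat_adj W"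
      using \<open>u \<in> S\<close> unfolding S_def by blast
    then have "Min ((\<lambda>z. \<bar>Re z\<bar>) ` spec L) \<le> sigma_min L + u"
      using linear_gap_le_sigma_min[OF assms(1)] by blast
    moreover have "sigma_min L \<le> Min ((\<lambda>z. \<bar>Re z\<bar>) ` spec L) + c"
      by (rule sigma_min_le_linear_gap[OF skew])
    moreover have "0 \<le> u" using \<open>u = op_norm U\<close> op_norm_nonneg by simp
    ultimately show ?thesis using \<open>0 \<le> c\<close> by linarith
  qed
  ultimately have "\<bar>Min ((\<lambda>z. \<bar>Re z\<bar>) ` spec L) - sigma_min L\<bar> - c \<le> Inf S"
    by (rule cInf_greatest)
  then show ?thesis unfolding dev_normality_def S_def by simp
qed

section \<open>The spectral localizer\<close>

lemma mat_adj_kron: "mat_adj (kron A G) = kron (mat_adj A) (mat_adj G)"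
  by (simp add: cvec_eq_iff kron_def mat_adj_def)

lemma kron_diff_left: "kron (X - Y) G = kron X G - kron Y G"
  by (simp add: cvec_eq_iff kron_def algebra_simps)

lemma kron_add_right: "kron X (G + H) = kron X G + kron X H"
  by (simp add: cvec_eq_iff kron_def algebra_simps)

lemma mat_adj_P_proj: "mat_adj P_proj = P_proj"
  by (auto simp: cvec_eq_iff P_proj_def mat_adj_def)

lemma mat_adj_Q_proj: "mat_adj Q_proj = Q_proj"
  by (auto simp: cvec_eq_iff Q_proj_def mat_adj_def)

lemma P_proj_add_Q_proj: "P_proj + Q_proj = mat 1"
  by (auto simp: cvec_eq_iff Q_proj_def P_proj_def cmat_def)

lemma localizer_sub_adj:
  assumes "clifford_rep d \<Gamma>" and "\<forall>i<d. hermitian (A i)"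
  shows "localizer d \<Gamma> A B lam \<nu> - mat_adj (localizer d \<Gamma> A B lam \<nu>)
     = kron ((B - mat \<nu>) - mat_adj (B - mat \<nu>)) (mat 1)"
proof -
  define S where "S = (\<Sum>i<d. kron (A i - mat (complex_of_real (lam i))) (\<Gamma> i))"
  define C where "C = B - mat \<nu>"
  have L: "localizer d \<Gamma> A B lam \<nu> = S + kron C P_proj - kron (mat_adj C) Q_proj"
    unfolding localizer_def S_def C_def ..
  have "mat_adj S = S" unfolding S_def mat_adj_sum mat_adj_kron
  proof (rule sum.cong)
    fix i assume "i \<in> {..<d}"
    then have "hermitian (A i)" "hermitian (\<Gamma> i)"
      using assms unfolding clifford_rep_def by auto
    then show "kron (mat_adj (A i - mat (complex_of_real (lam i)))) (mat_adj (\<Gamma> i))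
        = kron (A i - mat (complex_of_real (lam i))) (\<Gamma> i)"
      unfolding hermitian_def mat_adj_diff mat_adj_mat by simp
  qed simp
  then have "mat_adj (localizer d \<Gamma> A B lam \<nu>) = S + kron (mat_adj C) P_proj - kron C Q_proj"
    unfolding L by (simp only: mat_adj_diff mat_adj_add mat_adj_kron mat_adj_P_proj mat_adj_Q_proj
        mat_adj_adj)
  then have "localizer d \<Gamma> A B lam \<nu> - mat_adj (localizer d \<Gamma> A B lam \<nu>)
      = kron (C - mat_adj C) (P_proj + Q_proj)"
    unfolding L kron_diff_left kron_add_right by (simp add: algebra_simps)
  then show ?thesis unfolding P_proj_add_Q_proj C_def .
qed

lemma power2_norm_vec_prod:
  "(norm (v :: complex^('a::finite \<times> 'b::finite)))^2 = (\<Sum>s\<in>UNIV. (norm (\<chi> a. v$(a, s)))^2)"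
proof -
  have "(norm v)^2 = (\<Sum>a\<in>UNIV. \<Sum>s\<in>UNIV. (norm (v$(a, s)))^2)"
    unfolding power2_norm_vec_eq_sum
    using sum.cartesian_product'[of "\<lambda>q. (norm (v$q))^2" UNIV UNIV] by (simp only: UNIV_Times_UNIV)
  also have "\<dots> = (\<Sum>s\<in>UNIV. (norm (\<chi> a. v$(a, s)))^2)"
    unfolding power2_norm_vec_eq_sum vec_lambda_beta by (rule sum.swap)
  finally show ?thesis .
qed


lemma kron_mat_1_slice:
  fixes X :: "complex^'a^'a" and v :: "complex^('a \<times> 'b::finite)"
  shows "(\<chi> a. (kron X (mat 1 :: complex^'b^'b) *v v)$(a, s)) = X *v (\<chi> a. v$(a, s))"
proof -
  have "(kron X (mat 1 :: complex^'b^'b) *v v)$(a, s)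
      = (\<Sum>b\<in>UNIV. \<Sum>t\<in>UNIV. X$a$b * ((if s = t then 1 else 0) * v$(b, t)))" for a
    unfolding matrix_vector_mult_def kron_def cmat_def vec_lambda_beta
    using sum.cartesian_product'[of "\<lambda>q. X$a$fst q * (if s = snd q then 1 else 0) * v$q" UNIV UNIV]
    by (simp add: UNIV_Times_UNIV mult.assoc)
  then show ?thesis
    by (simp add: cvec_eq_iff matrix_vector_mult_def sum_distrib_left[symmetric]
        if_distrib[of "\<lambda>a. a * _"] cong: if_cong)
qed

lemma norm_kron_mat_1_mult_le:
  fixes X :: "complex^'a^'a" and v :: "complex^('a \<times> 'b::finite)"
  shows "norm (kron X (mat 1 :: complex^'b^'b) *v v) \<le> op_norm X * norm v"
proof -
  have "(norm (kron X (mat 1 :: complex^'b^'b) *v v))^2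
      = (\<Sum>s\<in>UNIV. (norm (X *v (\<chi> a. v$(a, s))))^2)"
    unfolding power2_norm_vec_prod kron_mat_1_slice ..
  also have "\<dots> \<le> (\<Sum>s\<in>UNIV. (op_norm X * norm (\<chi> a. v$(a, s)))^2)"
    by (intro sum_mono power_mono norm_matrix_vector_mult_le) simp
  also have "\<dots> = (op_norm X * norm v)^2"
    unfolding power_mult_distrib power2_norm_vec_prod[of v] by (simp add: sum_distrib_left)
  finally show ?thesis
    by (rule power2_le_imp_le) (simp add: op_norm_nonneg)
qed

lemma strict_total_order_ranking:
  fixes lt :: "'k::finite \<Rightarrow> 'k \<Rightarrow> bool"
  assumes "irreflp lt" and "transp lt" and "totalp lt"
  obtains r :: "'k \<Rightarrow> nat" where "inj r" "lt = (\<lambda>i j. r i < r j)"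
proof -
  define r where "r i = card {j. lt j i}" for i
  have mono: "r i < r j" if "lt i j" for i j
  proof -
    have "{x. lt x i} \<subset> {x. lt x j}"
      using that assms(1,2) by (auto dest: transpD irreflpD)
    then show ?thesis unfolding r_def by (simp add: psubset_card_mono)
  qed
  have "r i \<noteq> r j" if "i \<noteq> j" for i j
    using totalpD[OF assms(3) that] mono by (metis less_irrefl)
  then have "inj r" by (auto intro: injI)
  moreover have "lt i j \<longleftrightarrow> r i < r j" for i j
    using mono totalpD[OF assms(3), of i j] by (metis less_asym less_irrefl)
  ultimately show ?thesis using that by blast
qed

lemma irreflp_lex_less3: "irreflp lex_less3"
  and transp_lex_less3: "transp lex_less3"
  and totalp_lex_less3: "totalp lex_less3"
  unfolding irreflp_def transp_def totalp_on_def lex_less3_def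
  by (auto simp: less_bool_def neq_iff)

theorem mainTheorem11:
  fixes d :: nat
    and \<Gamma> :: "nat \<Rightarrow> complex^(bool \<times> ('m::{finite,linorder}))^(bool \<times> ('m::{finite,linorder}))"
    and A :: "nat \<Rightarrow> complex^('n::{finite,linorder})^('n::{finite,linorder})"
    and B :: "complex^('n::{finite,linorder})^('n::{finite,linorder})"
    and lam :: "nat \<Rightarrow> real"
    and \<nu> :: complex
  assumes "d \<ge> 1"
    and "clifford_rep d \<Gamma>"
    and "\<forall>i<d. hermitian (A i)"
  shows "\<bar>clifford_linear_gap d \<Gamma> A B lam \<nu> - clifford_radial_gap d \<Gamma> A B lam \<nu>\<bar>
     \<le> sqrt (real CARD('n \<times> bool \<times> 'm)) * op_norm ((B - mat \<nu>) - mat_adj (B - mat \<nu>))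
       + dev_normality lex_less3 (localizer d \<Gamma> A B lam \<nu>)"
proof -
  define L where "L = localizer d \<Gamma> A B lam \<nu>"
  define X where "X = (B - mat \<nu>) - mat_adj (B - mat \<nu>)"
  obtain r :: "'n \<times> bool \<times> 'm \<Rightarrow> nat" where "inj r" and lex: "lex_less3 = (\<lambda>p q. r p < r q)"
    using strict_total_order_ranking[OF irreflp_lex_less3 transp_lex_less3 totalp_lex_less3] .
  have "\<forall>v. norm ((L - mat_adj L) *v v) \<le> op_norm X * norm v"
    unfolding L_def X_def localizer_sub_adj[OF assms(2,3)] using norm_kron_mat_1_mult_le by blast
  from abs_linear_gap_sub_sigma_min_le[OF \<open>inj r\<close> this]
  have "\<bar>clifford_linear_gap d \<Gamma> A B lam \<nu> - clifford_radial_gap d \<Gamma> A B lam \<nu>\<bar>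
      \<le> op_norm X + dev_normality lex_less3 L"
    unfolding clifford_linear_gap_def clifford_radial_gap_def L_def lex .
  moreover have "1 \<le> CARD('n \<times> bool \<times> 'm)"
    using finite_UNIV_card_ge_0[where 'a = "'n \<times> bool \<times> 'm"] by simp
  then have "1 \<le> sqrt (real CARD('n \<times> bool \<times> 'm))"
    by (simp only: real_sqrt_ge_1_iff of_nat_le_iff[of 1, unfolded of_nat_1])
  then have "op_norm X \<le> sqrt (real CARD('n \<times> bool \<times> 'm)) * op_norm X"
    using mult_right_mono[OF _ op_norm_nonneg[of X]] by (metis mult_1)
  ultimately show ?thesis unfolding L_def X_def by linarith
qed

end
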